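(* For any $u,\alpha\in\mathbb C$ with $\mathrm{Re}(u+\alpha)>0$ and any $\kappa_1,\kappa_2\in\mathbb R$, $$\int_{\mathbb R^2}e^{-\alpha(\kappa_1+\kappa_2-\lambda_1-\lambda_2)-u(\lambda_1-\lambda_2)-e^{-(\kappa_1-\lambda_1)}-e^{-(\lambda_1-\kappa_2)}-e^{-(\kappa_2-\lambda_2)}}\,d\lambda_1d\lambda_2=\int_{\mathbb R^2}e^{-\alpha(\pi_1+\pi_2-\kappa_1-\kappa_2)-u(\pi_1-\pi_2)-e^{-(\pi_1-\kappa_1)}-e^{-(\kappa_1-\pi_2)}-e^{-(\pi_2-\kappa_2)}}\,d\pi_1d\pi_2,$$ and both integrals are finite (absolutely convergent). *)

theory Defs
  imports "HOL-Analysis.Analysis"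
begin

end

theory Submission
  imports Defs
begin

text \<open>
  Both integrands factor. With \<open>k = \<kappa>1 + \<kappa>2\<close>, the first is \<open>f1 \<lambda>1 * f2 \<lambda>2\<close> where
  \<open>f1 x = exp (- \<alpha> k) exp ((\<alpha> - u) x - exp (x - \<kappa>1) - exp (\<kappa>2 - x))\<close> and
  \<open>f2 y = exp ((\<alpha> + u) y - exp (y - \<kappa>2))\<close>, and the second is \<open>f2 (k - \<pi>1) * f1 (k - \<pi>2)\<close>.
  The factor \<open>f1\<close> decays double-exponentially at both ends, so it is integrable whatever
  \<open>\<alpha> - u\<close> is; \<open>f2\<close> decays double-exponentially at \<open>+\<infinity>\<close> but only like
  \<open>exp (Re (\<alpha> + u) y)\<close> at \<open>-\<infinity>\<close>, which is where \<open>Re (u + \<alpha>) > 0\<close> is needed.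
  Fubini makes both products absolutely integrable, and since the reflections \<open>x \<mapsto> k - x\<close>
  preserve one-dimensional integrals, both double integrals equal \<open>\<integral>f1 * \<integral>f2\<close>.
\<close>

lemma lborel_integrable_exp_minus_to_infinity:
  fixes a t :: real
  assumes "a > 0"
  shows "integrable lborel (\<lambda>x. indicator {t..} x * exp (- a * x))"
proof -
  have "(\<lambda>x. exp (- a * x)) absolutely_integrable_on {t..}"
    using integrable_on_exp_minus_to_infinity[OF assms]
    by (rule nonnegative_absolutely_integrable_1) simp
  then have "integrable lebesgue (\<lambda>x. indicator {t..} x * exp (- a * x))"
    by (simp add: absolutely_integrable_on_def set_integrable_def)
  then show ?thesis
    by (simp add: integrable_completion)
qed

lemma lborel_integrable_exp_to_minus_infinity:
  fixes a t :: real
  assumes "a > 0"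
  shows "integrable lborel (\<lambda>x. indicator {..t} x * exp (a * x))"
  using lborel_integrable_real_affine[OF lborel_integrable_exp_minus_to_infinity[OF assms, of "- t"],
      of "-1" 0]
  by (simp add: indicator_def)

lemma tangent_le_exp:
  fixes m y :: real
  assumes "m > 0"
  shows "m * (1 + y - ln m) \<le> exp y"
proof -
  have "m * (1 + (y - ln m)) \<le> m * exp (y - ln m)"
    using assms exp_ge_add_one_self by simp
  also have "\<dots> = exp y"
    using assms by (simp add: exp_diff)
  finally show ?thesis
    by (simp add: algebra_simps)
qed

lemma integrable_exp_linear_minus_exp:
  fixes c k :: real
  assumes "c > 0"
  shows "integrable lborel (\<lambda>y. exp (c * y - exp (y - k)))"
proof (rule Bochner_Integration.integrable_bound)
  define K where "K = exp ((c + 1) * (k + ln (c + 1) - 1))"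
  show "integrable lborel (\<lambda>y. indicator {..k} y * exp (c * y) + K * (indicator {k..} y * exp (- y)))"
    using lborel_integrable_exp_minus_to_infinity[of 1 k]
      lborel_integrable_exp_to_minus_infinity[OF assms, of k]
    by simp
  show "AE y in lborel. norm (exp (c * y - exp (y - k)))
      \<le> norm (indicator {..k} y * exp (c * y) + K * (indicator {k..} y * exp (- y)))"
  proof (rule AE_I2)
    fix y :: real
    \<comment> \<open>the tangent of exp at ln (c + 1) shows that (c + 1) y - exp (y - k) is bounded above\<close>
    have "(c + 1) * (1 + (y - k) - ln (c + 1)) \<le> exp (y - k)"
      using assms by (intro tangent_le_exp) simp
    then have "exp (c * y - exp (y - k)) \<le> K * exp (- y)"
      by (simp add: K_def flip: exp_add) (simp add: algebra_simps)
    moreover have "exp (c * y - exp (y - k)) \<le> exp (c * y)"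
      by simp
    ultimately show "norm (exp (c * y - exp (y - k)))
        \<le> norm (indicator {..k} y * exp (c * y) + K * (indicator {k..} y * exp (- y)))"
      by (auto simp: indicator_def K_def intro!: add_increasing)
  qed
qed simp

lemma lborel_integrable_reflect:
  fixes f :: "real \<Rightarrow> 'a::{banach, second_countable_topology}"
  assumes "integrable lborel f"
  shows "integrable lborel (\<lambda>x. f (k - x))"
  using lborel_integrable_real_affine[OF assms, of "-1" k] by simp

lemma lborel_integral_reflect:
  fixes f :: "real \<Rightarrow> 'a::{banach, second_countable_topology}"
  shows "(\<integral>x. f (k - x) \<partial>lborel) = (\<integral>x. f x \<partial>lborel)"
  using lborel_integral_real_affine[of "-1" f k] by simp

lemma integrable_exp_linear_minus_two_exp:
  fixes d a b :: real
  shows "integrable lborel (\<lambda>x. exp (d * x - exp (x - a) - exp (b - x)))"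
proof -
  have gt_minus_one: "integrable lborel (\<lambda>x. exp (d * x - exp (x - a) - exp (b - x)))"
    if "d > -1" for d a b :: real
  proof (rule Bochner_Integration.integrable_bound)
    show "integrable lborel (\<lambda>x. exp (- 1 - b) * exp ((d + 1) * x - exp (x - a)))"
      using that by (intro integrable_mult_right integrable_exp_linear_minus_exp) simp
    show "AE x in lborel. norm (exp (d * x - exp (x - a) - exp (b - x)))
        \<le> norm (exp (- 1 - b) * exp ((d + 1) * x - exp (x - a)))"
    proof (rule AE_I2)
      fix x :: real
      have "1 + (b - x) \<le> exp (b - x)"
        by (rule exp_ge_add_one_self)
      then show "norm (exp (d * x - exp (x - a) - exp (b - x)))
          \<le> norm (exp (- 1 - b) * exp ((d + 1) * x - exp (x - a)))"
        by (simp add: algebra_simps flip: exp_add)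
    qed
  qed simp
  show ?thesis
  proof (cases "d > -1")
    case False
    \<comment> \<open>reflecting x to - x swaps the two double-exponential walls and negates d\<close>
    then have "integrable lborel (\<lambda>x. exp ((- d) * x - exp (x - (- b)) - exp ((- a) - x)))"
      by (intro gt_minus_one) simp
    from lborel_integrable_reflect[OF this, of 0] show ?thesis
      by (simp add: algebra_simps)
  qed (rule gt_minus_one)
qed

lemma integrable_exp_iff_integrable_exp_Re:
  fixes \<psi> :: "'a \<Rightarrow> complex"
  assumes "\<psi> \<in> borel_measurable M"
  shows "integrable M (\<lambda>x. exp (\<psi> x)) \<longleftrightarrow> integrable M (\<lambda>x. exp (Re (\<psi> x)))"
proof -
  have "(\<lambda>x. exp (\<psi> x)) \<in> borel_measurable M"
    using assms by measurable
  then have "integrable M (\<lambda>x. exp (\<psi> x)) \<longleftrightarrow> integrable M (\<lambda>x. norm (exp (\<psi> x)))"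
    by (rule integrable_norm_iff[symmetric])
  then show ?thesis
    by simp
qed

lemma (in pair_sigma_finite) integrable_product_mult:
  fixes f :: "'a \<Rightarrow> 'c::{real_normed_field, second_countable_topology, banach}" and g :: "'b \<Rightarrow> 'c"
  assumes f: "integrable M1 f" and g: "integrable M2 g"
  shows "integrable (M1 \<Otimes>\<^sub>M M2) (\<lambda>(x, y). f x * g y)"
proof (rule Fubini_integrable)
  have [measurable]: "f \<in> borel_measurable M1" "g \<in> borel_measurable M2"
    using f g by (simp_all add: borel_measurable_integrable)
  show "(\<lambda>(x, y). f x * g y) \<in> borel_measurable (M1 \<Otimes>\<^sub>M M2)"
    by measurable
  have "integrable M1 (\<lambda>x. norm (f x) * (\<integral>y. norm (g y) \<partial>M2))"
    using f by (intro integrable_mult_left) (simp add: integrable_norm_iff)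
  then show "integrable M1 (\<lambda>x. \<integral>y. norm (case (x, y) of (x, y) \<Rightarrow> f x * g y) \<partial>M2)"
    by (simp add: norm_mult)
  show "AE x in M1. integrable M2 (\<lambda>y. case (x, y) of (x, y) \<Rightarrow> f x * g y)"
    using g by simp
qed

lemma (in pair_sigma_finite) integral_product_mult:
  fixes f :: "'a \<Rightarrow> 'c::{real_normed_field, second_countable_topology, banach}" and g :: "'b \<Rightarrow> 'c"
  assumes "integrable M1 f" and "integrable M2 g"
  shows "(\<integral>(x, y). f x * g y \<partial>(M1 \<Otimes>\<^sub>M M2)) = integral\<^sup>L M1 f * integral\<^sup>L M2 g"
  using integral_fst[OF integrable_product_mult[OF assms]] by simp

lemma absolutely_integrable_product_lborel:
  fixes f :: "'a::euclidean_space \<Rightarrow> 'c::{real_normed_field, euclidean_space}"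
    and g :: "'b::euclidean_space \<Rightarrow> 'c"
  assumes "integrable lborel f" and "integrable lborel g"
  shows "(\<lambda>(x, y). f x * g y) absolutely_integrable_on UNIV"
    and "integral UNIV (\<lambda>(x, y). f x * g y) = integral\<^sup>L lborel f * integral\<^sup>L lborel g"
proof -
  have int: "integrable lborel (\<lambda>(x, y). f x * g y)"
    using lborel_pair.integrable_product_mult[OF assms] by (simp add: lborel_prod)
  then have "integrable lebesgue (\<lambda>(x, y). f x * g y)"
    by (simp add: integrable_completion borel_measurable_integrable)
  then show "(\<lambda>(x, y). f x * g y) absolutely_integrable_on UNIV"
    by (simp add: absolutely_integrable_on_def set_integrable_def)
  show "integral UNIV (\<lambda>(x, y). f x * g y) = integral\<^sup>L lborel f * integral\<^sup>L lborel g"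
    using integral_lborel[OF int] lborel_pair.integral_product_mult[OF assms] by (simp add: lborel_prod)
qed

theorem lemma3p6:
  fixes u \<alpha> :: complex and \<kappa>1 \<kappa>2 :: real
  assumes "Re (u + \<alpha>) > 0"
  defines "F \<equiv> (\<lambda>(l1::real, l2::real).
      exp (- \<alpha> * complex_of_real (\<kappa>1 + \<kappa>2 - l1 - l2) - u * complex_of_real (l1 - l2)
           - complex_of_real (exp (- (\<kappa>1 - l1)) + exp (- (l1 - \<kappa>2)) + exp (- (\<kappa>2 - l2)))))"
    and "G \<equiv> (\<lambda>(p1::real, p2::real).
      exp (- \<alpha> * complex_of_real (p1 + p2 - \<kappa>1 - \<kappa>2) - u * complex_of_real (p1 - p2)
           - complex_of_real (exp (- (p1 - \<kappa>1)) + exp (- (\<kappa>1 - p2)) + exp (- (p2 - \<kappa>2)))))"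
  shows "F absolutely_integrable_on UNIV \<and> G absolutely_integrable_on UNIV
         \<and> integral UNIV F = integral UNIV G"
proof -
  define k where "k = \<kappa>1 + \<kappa>2"
  define f1 where "f1 = (\<lambda>x::real. exp (- \<alpha> * of_real k) *
    exp ((\<alpha> - u) * of_real x - of_real (exp (x - \<kappa>1) + exp (\<kappa>2 - x))))"
  define f2 where "f2 = (\<lambda>y::real. exp ((\<alpha> + u) * of_real y - of_real (exp (y - \<kappa>2))))"
  have F_eq: "F = (\<lambda>(x, y). f1 x * f2 y)"
    by (auto simp: F_def f1_def f2_def k_def algebra_simps simp flip: exp_add)
  have G_eq: "G = (\<lambda>(x, y). f2 (k - x) * f1 (k - y))"
    by (auto simp: G_def f1_def f2_def k_def algebra_simps simp flip: exp_add)
  have f1: "integrable lborel f1"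
    unfolding f1_def using integrable_exp_linear_minus_two_exp[of "Re (\<alpha> - u)" \<kappa>1 \<kappa>2]
    by (intro integrable_mult_right) (simp add: integrable_exp_iff_integrable_exp_Re diff_diff_eq)
  have f2: "integrable lborel f2"
    using integrable_exp_linear_minus_exp[of "Re (\<alpha> + u)" \<kappa>2] assms(1)
    by (simp add: f2_def integrable_exp_iff_integrable_exp_Re add.commute)
  note F_prod = absolutely_integrable_product_lborel[OF f1 f2]
  note G_prod = absolutely_integrable_product_lborel[OF lborel_integrable_reflect[OF f2, of k]
    lborel_integrable_reflect[OF f1, of k]]
  have "integral UNIV F = integral\<^sup>L lborel f1 * integral\<^sup>L lborel f2"
    unfolding F_eq by (rule F_prod(2))
  also have "\<dots> = (\<integral>x. f2 (k - x) \<partial>lborel) * (\<integral>y. f1 (k - y) \<partial>lborel)"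
    by (simp add: lborel_integral_reflect)
  also have "\<dots> = integral UNIV G"
    unfolding G_eq by (rule G_prod(2)[symmetric])
  finally show ?thesis
    unfolding F_eq G_eq using F_prod(1) G_prod(1) by blast
qed

end
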